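(* Let $\mathcal{G}=(\mathcal{V},\mathcal{E},\mathcal{W})$ be an undirected weighted graph (weights are nonzero reals, possibly negative) with $c$ connected components, and let $\mathcal{F}$ be a spanning forest of $\mathcal{G}$ with cycle subgraph $\mathcal{C}$. Then the weighted Laplacian $L(\mathcal{G})=EWE^T$ is similar to the block-diagonal matrix $$\begin{bmatrix} L_e(\mathcal{F})\, R_{(\mathcal{F},\mathcal{C})}\, W\, R_{(\mathcal{F},\mathcal{C})}^T & 0 \\ 0 & 0_{c\times c}\end{bmatrix},$$ where $R_{(\mathcal{F},\mathcal{C})}=\begin{bmatrix} I & L_e(\mathcal{F})^{-1}E_{\mathcal{F}}^TE_{\mathcal{C}}\end{bmatrix}$.
   Context: A weighted graph $\mathcal{G}=(\mathcal{V},\mathcal{E},\mathcal{W})$ has node set $\mathcal{V}$, edge set $\mathcal{E}$ and weight function $\mathcal{W}:\mathcal{E}\to\mathbb{R}\setminus\{0\}$; $W$ is the $|\mathcal{E}|\times|\mathcal{E}|$ diagonal matrix with $W_{kk}=w_k=\mathcal{W}(k)$. Each edge is given an arbitrary orientation, and the incidence matrix $E\in\mathbb{R}^{|\mathcal{V}|\times|\mathcal{E}|}$ has, in the column of edge $k=(i,j)$, entry $+1$ in row $i$, $-1$ in row $j$, and $0$ elsewhere. The weighted Laplacian is $L(\mathcal{G})=EWE^T$. A spanning forest $\mathcal{F}=(\mathcal{V},\mathcal{E}_{\mathcal{F}})$ is an acyclic subgraph with $|\mathcal{V}|-c$ edges containing a spanning tree of each connected component; the cycle subgraph is $\mathcal{C}=(\mathcal{V},\mathcal{E}\setminus\mathcal{E}_{\mathcal{F}})$.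 Edges are labeled so that $E=[E_{\mathcal{F}}\ E_{\mathcal{C}}]$ with $E_{\mathcal{F}}, E_{\mathcal{C}}$ the incidence matrices of $\mathcal{F}$ and $\mathcal{C}$, and $W$ is ordered accordingly. $L_e(\mathcal{F})=E_{\mathcal{F}}^TE_{\mathcal{F}}$ (the edge Laplacian of the forest), which is invertible since $E_{\mathcal{F}}$ has full column rank. *)

theory Defs
  imports "Jordan_Normal_Form.Matrix" "Jordan_Normal_Form.Gauss_Jordan_Elimination"
begin

text \<open>Graphs: vertex set {0..<n}; edges given as a list of oriented pairs (i,j),
  the k-th list element being edge k with orientation i -> j.\<close>

definition simple_graph :: "nat \<Rightarrow> (nat \<times> nat) list \<Rightarrow> bool" where
  "simple_graph n es \<longleftrightarrow> (\<forall>(a,b)\<in>set es. a < n \<and> b < n \<and> a \<noteq> b)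
     \<and> distinct (map (\<lambda>(a,b). {a,b}) es)"

definition adj :: "(nat \<times> nat) list \<Rightarrow> nat \<Rightarrow> nat \<Rightarrow> bool" where
  "adj es u v \<longleftrightarrow> (\<exists>(a,b)\<in>set es. (a = u \<and> b = v) \<or> (a = v \<and> b = u))"

definition reach :: "(nat \<times> nat) list \<Rightarrow> nat \<Rightarrow> nat \<Rightarrow> bool" where
  "reach es = (adj es)\<^sup>*\<^sup>*"

definition num_components :: "nat \<Rightarrow> (nat \<times> nat) list \<Rightarrow> nat" where
  "num_components n es = card ({0..<n} // {(u,v). u < n \<and> v < n \<and> reach es u v})"

definition is_cycle :: "(nat \<times> nat) list \<Rightarrow> nat list \<Rightarrow> bool" where
  "is_cycle es vs \<longleftrightarrow> length vs \<ge> 3 \<and> distinct vs \<and>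
     (\<forall>i < length vs. adj es (vs ! i) (vs ! ((i + 1) mod length vs)))"

definition acyclic_graph :: "(nat \<times> nat) list \<Rightarrow> bool" where
  "acyclic_graph es \<longleftrightarrow> \<not> (\<exists>vs. is_cycle es vs)"

definition spanning_forest :: "nat \<Rightarrow> (nat \<times> nat) list \<Rightarrow> (nat \<times> nat) list \<Rightarrow> bool" where
  "spanning_forest n fs es \<longleftrightarrow> set fs \<subseteq> set es \<and> acyclic_graph fs
     \<and> length fs = n - num_components n es
     \<and> (\<forall>u < n. \<forall>v < n. reach fs u v \<longleftrightarrow> reach es u v)"

definition incidence :: "nat \<Rightarrow> (nat \<times> nat) list \<Rightarrow> real mat" where
  "incidence n es = mat n (length es)
     (\<lambda>(i,k). if i = fst (es ! k) then 1 else if i = snd (es ! k) then -1 else 0)"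

definition hcat :: "'a mat \<Rightarrow> 'a mat \<Rightarrow> 'a mat" where
  "hcat A B = mat (dim_row A) (dim_col A + dim_col B)
     (\<lambda>(i,j). if j < dim_col A then A $$ (i,j) else B $$ (i, j - dim_col A))"

end

theory Submission
  imports Defs "Jordan_Normal_Form.Determinant"
begin

(* Let K be the n x c indicator matrix of the connected components.  Then
   (i)   E_F^T K = 0 and K^T E_C = 0, because no edge leaves its component;
   (ii)  a vector killed by E_F^T and by K^T is constant on every component (the forest
         connects it) and has zero sum there, hence vanishes;
   (iii) |E_F| + c = n.
   So the square matrix S = [E_F^T; K^T] is invertible.  Since S S^T = diag (L_e, K^T K),
   the edge Laplacian L_e is invertible; S E_C = S (E_F X) for X = L_e^-1 E_F^T E_C gives
   E_C = E_F X, i.e. E = E_F R.  Hence L = E_F V E_F^T with V = R W R^T, and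
   S L = diag (L_e V, 0) S exhibits the similarity. *)

definition vcat :: "'a mat \<Rightarrow> 'a mat \<Rightarrow> 'a mat" where
  "vcat A B = mat (dim_row A + dim_row B) (dim_col A)
     (\<lambda>(i,j). if i < dim_row A then A $$ (i,j) else B $$ (i - dim_row A, j))"

lemma hcat_carrier:
  "A \<in> carrier_mat n p \<Longrightarrow> B \<in> carrier_mat n q \<Longrightarrow> hcat A B \<in> carrier_mat n (p + q)"
  unfolding hcat_def by auto

lemma vcat_carrier:
  "A \<in> carrier_mat p n \<Longrightarrow> B \<in> carrier_mat q n \<Longrightarrow> vcat A B \<in> carrier_mat (p + q) n"
  unfolding vcat_def by auto

(* Both concatenations are block matrices with empty blocks, so the block-product
   rules of the library apply to them. *)
lemma hcat_as_four_block:
  assumes "A \<in> carrier_mat n p" "B \<in> carrier_mat n q"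
  shows "hcat A B = four_block_mat A B (0\<^sub>m 0 p) (0\<^sub>m 0 q)"
  using assms by (intro eq_matI) (auto simp: hcat_def)

lemma vcat_as_four_block:
  assumes "A \<in> carrier_mat p n" "B \<in> carrier_mat q n"
  shows "vcat A B = four_block_mat A (0\<^sub>m p 0) B (0\<^sub>m q 0)"
  using assms by (intro eq_matI) (auto simp: vcat_def)

lemma transpose_vcat:
  assumes "A \<in> carrier_mat p n" "B \<in> carrier_mat q n"
  shows "transpose_mat (vcat A B) = hcat (transpose_mat A) (transpose_mat B)"
  using assms by (intro eq_matI) (auto simp: vcat_def hcat_def)

lemma mult_hcat:
  assumes "A \<in> carrier_mat n p" "B \<in> carrier_mat p q" "C \<in> carrier_mat p r"
  shows "A * hcat B C = hcat (A * B) (A * C)"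
  using assms by (intro eq_matI) (auto simp: hcat_def scalar_prod_def)

lemma vcat_mult:
  assumes "A \<in> carrier_mat p n" "B \<in> carrier_mat q n" "C \<in> carrier_mat n r"
  shows "vcat A B * C = vcat (A * C) (B * C)"
  using assms by (intro eq_matI) (auto simp: vcat_def scalar_prod_def)

lemma vcat_mult_hcat:
  assumes "A \<in> carrier_mat p n" "B \<in> carrier_mat q n" "C \<in> carrier_mat n r" "D \<in> carrier_mat n s"
  shows "vcat A B * hcat C D = four_block_mat (A * C) (A * D) (B * C) (B * D)"
  unfolding vcat_as_four_block[OF assms(1,2)] hcat_as_four_block[OF assms(3,4)]
  by (subst mult_four_block_mat[OF assms(1) zero_carrier_mat assms(2) zero_carrier_mat
        assms(3,4) zero_carrier_mat zero_carrier_mat])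
    (use assms in simp)

lemma four_block_mult_vcat:
  assumes "M1 \<in> carrier_mat p1 q1" "M2 \<in> carrier_mat p1 q2" "M3 \<in> carrier_mat p2 q1"
    "M4 \<in> carrier_mat p2 q2" "X \<in> carrier_mat q1 n" "Y \<in> carrier_mat q2 n"
  shows "four_block_mat M1 M2 M3 M4 * vcat X Y = vcat (M1 * X + M2 * Y) (M3 * X + M4 * Y)"
proof -
  have sums: "M1 * X + M2 * Y \<in> carrier_mat p1 n" "M3 * X + M4 * Y \<in> carrier_mat p2 n"
    using assms by auto
  show ?thesis
    unfolding vcat_as_four_block[OF assms(5,6)] vcat_as_four_block[OF sums]
    by (subst mult_four_block_mat[OF assms(1-5) zero_carrier_mat assms(6) zero_carrier_mat])
      (use assms in simp)
qed

lemma vcat_mult_vec_zero: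
  assumes "A \<in> carrier_mat p n" "B \<in> carrier_mat q n" "x \<in> carrier_vec n"
    and "vcat A B *\<^sub>v x = 0\<^sub>v (p + q)"
  shows "A *\<^sub>v x = 0\<^sub>v p" "B *\<^sub>v x = 0\<^sub>v q"
proof -
  have "(A *\<^sub>v x) $ i = 0" if "i < p" for i
    using arg_cong[OF assms(4), of "\<lambda>v. v $ i"] that assms(1-3)
    by (auto simp: vcat_def scalar_prod_def)
  then show "A *\<^sub>v x = 0\<^sub>v p" using assms(1) by (intro eq_vecI) auto
  have "(B *\<^sub>v x) $ i = 0" if "i < q" for i
    using arg_cong[OF assms(4), of "\<lambda>v. v $ (p + i)"] that assms(1-3)
    by (auto simp: vcat_def scalar_prod_def)
  then show "B *\<^sub>v x = 0\<^sub>v q" using assms(2) by (intro eq_vecI) auto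
qed

lemma mat_inverse_of_det_nonzero:
  fixes A :: "'a :: field mat"
  assumes A: "A \<in> carrier_mat n n" and det: "det A \<noteq> 0"
  obtains B where "mat_inverse A = Some B" "A * B = 1\<^sub>m n" "B * A = 1\<^sub>m n" "B \<in> carrier_mat n n"
proof -
  have "A \<in> Units (ring_mat TYPE('a) n ())" by (rule det_non_zero_imp_unit[OF A det])
  then obtain B where "mat_inverse A = Some B" using mat_inverse(1)[OF A] by fastforce
  with mat_inverse(2)[OF A this] that show ?thesis by blast
qed

lemma similar_mat_by_intertwiner:
  fixes A B S :: "'a :: field mat"
  assumes A: "A \<in> carrier_mat n n" and B: "B \<in> carrier_mat n n" and S: "S \<in> carrier_mat n n"
    and det: "det S \<noteq> 0" and intertwine: "S * A = B * S"
  shows "similar_mat A B"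
proof -
  obtain T where ST: "S * T = 1\<^sub>m n" and TS: "T * S = 1\<^sub>m n" and T: "T \<in> carrier_mat n n"
    using mat_inverse_of_det_nonzero[OF S det] by blast
  have "A = T * S * A" using TS A by simp
  also have "\<dots> = T * (B * S)" using T S A intertwine by (simp add: assoc_mult_mat)
  also have "\<dots> = T * B * S" using T B S by (simp add: assoc_mult_mat)
  finally have "similar_mat_wit A B T S"
    by (intro similar_mat_witI[OF TS ST _ A B T S])
  then show ?thesis unfolding similar_mat_def by blast
qed

lemma det_nonzero_mult_left_cancel:
  fixes S :: "'a :: field mat"
  assumes S: "S \<in> carrier_mat n n" and det: "det S \<noteq> 0"
    and A: "A \<in> carrier_mat n m" and B: "B \<in> carrier_mat n m" and eq: "S * A = S * B"
  shows "A = B"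
proof -
  obtain T where TS: "T * S = 1\<^sub>m n" and T: "T \<in> carrier_mat n n"
    using mat_inverse_of_det_nonzero[OF S det] by blast
  have "A = T * S * A" using TS A by simp
  also have "\<dots> = T * S * B" using T S A B eq by (simp add: assoc_mult_mat)
  also have "\<dots> = B" using TS B by simp
  finally show ?thesis .
qed

locale complementary_frame =
  fixes n f c :: nat and EF K :: "'a :: field mat"
  assumes EF_carrier: "EF \<in> carrier_mat n f" and K_carrier: "K \<in> carrier_mat n c"
    and dims: "f + c = n"
    and orthogonal: "transpose_mat EF * K = 0\<^sub>m f c"
    and joint_kernel_trivial: "\<And>x. x \<in> carrier_vec n \<Longrightarrow> transpose_mat EF *\<^sub>v x = 0\<^sub>v f \<Longrightarrow>
      transpose_mat K *\<^sub>v x = 0\<^sub>v c \<Longrightarrow> x = 0\<^sub>v n"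
begin

(* The square matrix S = [EF^T; K^T] and the Gram matrix EF^T EF (the edge Laplacian). *)
definition frame :: "'a mat" where
  "frame = vcat (transpose_mat EF) (transpose_mat K)"

definition gram :: "'a mat" where
  "gram = transpose_mat EF * EF"

lemma frame_carrier: "frame \<in> carrier_mat n n"
  unfolding frame_def
  using vcat_carrier[of "transpose_mat EF" f n "transpose_mat K" c] EF_carrier K_carrier dims by simp

lemma gram_carrier: "gram \<in> carrier_mat f f"
  unfolding gram_def using EF_carrier by simp

lemma orthogonal_transpose: "transpose_mat K * EF = 0\<^sub>m c f"
proof -
  have "transpose_mat K * EF = transpose_mat (transpose_mat EF * K)"
    using transpose_mult[of "transpose_mat EF" f n K c] EF_carrier K_carrier by simp
  then show ?thesis using orthogonal by simp
qed

(* S is invertible: its kernel is the common kernel of EF^T and K^T. *)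
lemma det_frame_nonzero: "det frame \<noteq> 0"
proof
  assume "det frame = 0"
  then obtain x where x: "x \<in> carrier_vec n" "x \<noteq> 0\<^sub>v n" and "frame *\<^sub>v x = 0\<^sub>v (f + c)"
    using det_0_iff_vec_prod_zero[OF frame_carrier] dims by auto
  then have "transpose_mat EF *\<^sub>v x = 0\<^sub>v f" "transpose_mat K *\<^sub>v x = 0\<^sub>v c"
    using vcat_mult_vec_zero[of "transpose_mat EF" f n "transpose_mat K" c x]
      EF_carrier K_carrier unfolding frame_def by auto
  then show False using joint_kernel_trivial x by blast
qed

(* S S^T = [EF^T EF, 0; K^T EF, K^T K], so det S ^ 2 = det (EF^T EF) * det (K^T K). *)
lemma det_gram_nonzero: "det gram \<noteq> 0"
proof -
  have EFt: "transpose_mat EF \<in> carrier_mat f n" and Kt: "transpose_mat K \<in> carrier_mat c n"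
    using EF_carrier K_carrier by auto
  have "frame * transpose_mat frame = vcat (transpose_mat EF) (transpose_mat K) * hcat EF K"
    unfolding frame_def transpose_vcat[OF EFt Kt] by simp
  also have "\<dots> = four_block_mat gram (0\<^sub>m f c) (transpose_mat K * EF) (transpose_mat K * K)"
    unfolding gram_def vcat_mult_hcat[OF EFt Kt EF_carrier K_carrier] orthogonal ..
  finally have frame_gram: "frame * transpose_mat frame =
      four_block_mat gram (0\<^sub>m f c) (transpose_mat K * EF) (transpose_mat K * K)" .
  have "det gram * det (transpose_mat K * K) = det (frame * transpose_mat frame)"
    unfolding frame_gram
    by (rule det_four_block_mat_upper_right_zero[symmetric, OF gram_carrier refl])
      (use Kt EF_carrier K_carrier in auto)
  also have "\<dots> = det frame * det frame"
    using det_mult[OF frame_carrier] det_transpose[OF frame_carrier] frame_carrier by simp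
  finally have "det gram * det (transpose_mat K * K) = det frame * det frame" .
  with det_frame_nonzero show ?thesis by (metis mult_eq_0_iff)
qed

definition gram_inv :: "'a mat" where
  "gram_inv = the (mat_inverse gram)"

lemma gram_inv: "gram * gram_inv = 1\<^sub>m f" "gram_inv \<in> carrier_mat f f"
  using mat_inverse_of_det_nonzero[OF gram_carrier det_gram_nonzero]
  unfolding gram_inv_def by force+

(* Every C with K^T C = 0 lies in the range of EF: C = EF X with X = gram^-1 EF^T C.
   Both sides have the same image under the invertible S. *)
lemma range_decomposition:
  assumes C: "C \<in> carrier_mat n m" and KC: "transpose_mat K * C = 0\<^sub>m c m"
  shows "EF * (gram_inv * transpose_mat EF * C) = C"
proof -
  define X where "X = gram_inv * transpose_mat EF * C"
  have EFt: "transpose_mat EF \<in> carrier_mat f n" and Kt: "transpose_mat K \<in> carrier_mat c n"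
    using EF_carrier K_carrier by auto
  have X: "X \<in> carrier_mat f m" unfolding X_def using gram_inv(2) EFt C by auto
  have EFtC: "transpose_mat EF * C \<in> carrier_mat f m" using EFt C by simp
  have "transpose_mat EF * (EF * X) = gram * X"
    unfolding gram_def using assoc_mult_mat[OF EFt EF_carrier X] by simp
  also have "\<dots> = gram * (gram_inv * (transpose_mat EF * C))"
    unfolding X_def using assoc_mult_mat[OF gram_inv(2) EFt C] by simp
  also have "\<dots> = gram * gram_inv * (transpose_mat EF * C)"
    by (rule assoc_mult_mat[symmetric, OF gram_carrier gram_inv(2) EFtC])
  finally have EF_part: "transpose_mat EF * (EF * X) = transpose_mat EF * C"
    unfolding gram_inv(1) using left_mult_one_mat[OF EFtC] by simp
  have K_part: "transpose_mat K * (EF * X) = transpose_mat K * C"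
    using orthogonal_transpose KC EF_carrier X Kt
    by (simp add: assoc_mult_mat[symmetric, of _ c n _ f])
  have "frame * (EF * X) = frame * C"
    unfolding frame_def vcat_mult[OF EFt Kt C] using EF_carrier X
    by (subst vcat_mult[OF EFt Kt]) (auto simp: EF_part K_part)
  then show ?thesis
    unfolding X_def[symmetric]
    by (rule det_nonzero_mult_left_cancel[OF frame_carrier det_frame_nonzero _ C, rotated])
      (use EF_carrier X in auto)
qed

(* The core similarity: EF V EF^T is similar to diag (gram V, 0), because
   S (EF V EF^T) = [gram V EF^T; 0] = diag (gram V, 0) S. *)
lemma similar_congruence:
  assumes V: "V \<in> carrier_mat f f"
  shows "similar_mat (EF * V * transpose_mat EF)
    (four_block_mat (gram * V) (0\<^sub>m f c) (0\<^sub>m c f) (0\<^sub>m c c))"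
proof -
  have EFt: "transpose_mat EF \<in> carrier_mat f n" and Kt: "transpose_mat K \<in> carrier_mat c n"
    using EF_carrier K_carrier by auto
  have EFV: "EF * V \<in> carrier_mat n f" using EF_carrier V by simp
  have L: "EF * V * transpose_mat EF \<in> carrier_mat n n" using EFV EFt by simp
  have GV: "gram * V \<in> carrier_mat f f" using gram_carrier V by simp
  have "transpose_mat EF * (EF * V * transpose_mat EF) = transpose_mat EF * (EF * V) * transpose_mat EF"
    by (rule assoc_mult_mat[symmetric, OF EFt EFV EFt])
  also have "transpose_mat EF * (EF * V) = gram * V"
    unfolding gram_def by (rule assoc_mult_mat[symmetric, OF EFt EF_carrier V])
  finally have EF_row: "transpose_mat EF * (EF * V * transpose_mat EF) = gram * V * transpose_mat EF" .
  have "transpose_mat K * (EF * V * transpose_mat EF) = transpose_mat K * (EF * V) * transpose_mat EF"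
    by (rule assoc_mult_mat[symmetric, OF Kt EFV EFt])
  also have "transpose_mat K * (EF * V) = 0\<^sub>m c f"
    using assoc_mult_mat[symmetric, OF Kt EF_carrier V] orthogonal_transpose V by simp
  finally have K_row: "transpose_mat K * (EF * V * transpose_mat EF) = 0\<^sub>m c n"
    using EFt by simp
  have "frame * (EF * V * transpose_mat EF) = vcat (gram * V * transpose_mat EF) (0\<^sub>m c n)"
    unfolding frame_def vcat_mult[OF EFt Kt L] EF_row K_row ..
  also have "\<dots> = four_block_mat (gram * V) (0\<^sub>m f c) (0\<^sub>m c f) (0\<^sub>m c c) * frame"
    unfolding frame_def
    using four_block_mult_vcat[OF GV zero_carrier_mat zero_carrier_mat zero_carrier_mat EFt Kt]
      GV EFt Kt by simp
  finally show ?thesis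
    by (intro similar_mat_by_intertwiner[OF L _ frame_carrier det_frame_nonzero])
      (use GV dims in auto)
qed

(* The abstract form of the theorem: with E = [EF C] and K^T C = 0 we have E = EF R,
   so E W E^T = EF (R W R^T) EF^T. *)
theorem similar_block_diagonal:
  assumes C: "C \<in> carrier_mat n m" and KC: "transpose_mat K * C = 0\<^sub>m c m"
    and W: "W \<in> carrier_mat (f + m) (f + m)"
    and R_def: "R = hcat (1\<^sub>m f) (gram_inv * transpose_mat EF * C)"
  shows "similar_mat (hcat EF C * W * transpose_mat (hcat EF C))
    (four_block_mat (gram * R * W * transpose_mat R) (0\<^sub>m f c) (0\<^sub>m c f) (0\<^sub>m c c))"
proof -
  have X: "gram_inv * transpose_mat EF * C \<in> carrier_mat f m"
    using gram_inv(2) EF_carrier C by auto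
  have R: "R \<in> carrier_mat f (f + m)" unfolding R_def by (rule hcat_carrier[OF _ X]) simp
  have RW: "R * W \<in> carrier_mat f (f + m)" using R W by simp
  have Rt: "transpose_mat R \<in> carrier_mat (f + m) f" using R by simp
  have E: "hcat EF C = EF * R"
    unfolding R_def mult_hcat[OF EF_carrier one_carrier_mat X] range_decomposition[OF C KC]
    using EF_carrier by simp
  have "hcat EF C * W * transpose_mat (hcat EF C)
      = EF * R * W * (transpose_mat R * transpose_mat EF)"
    unfolding E transpose_mult[OF EF_carrier R] ..
  also have "\<dots> = EF * R * W * transpose_mat R * transpose_mat EF"
    using EF_carrier R W Rt by (intro assoc_mult_mat[symmetric]) auto
  also have "\<dots> = EF * (R * W * transpose_mat R) * transpose_mat EF"
    unfolding assoc_mult_mat[OF EF_carrier R W] assoc_mult_mat[OF EF_carrier RW Rt] ..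
  finally have L: "hcat EF C * W * transpose_mat (hcat EF C)
      = EF * (R * W * transpose_mat R) * transpose_mat EF" .
  have "gram * R * W * transpose_mat R = gram * (R * W * transpose_mat R)"
    unfolding assoc_mult_mat[OF gram_carrier R W] assoc_mult_mat[OF gram_carrier RW Rt] ..
  then show ?thesis
    unfolding L using similar_congruence[of "R * W * transpose_mat R"] RW Rt by simp
qed

end

lemma reach_edge: "(a, b) \<in> set es \<Longrightarrow> reach es a b"
  unfolding reach_def adj_def by (rule r_into_rtranclp) auto

lemma reach_sym: "reach es u v \<Longrightarrow> reach es v u"
  unfolding reach_def
proof (induction rule: rtranclp.induct)
  case (rtrancl_into_rtrancl a b c)
  have "adj es c b" using rtrancl_into_rtrancl(2) unfolding adj_def by auto
  then show ?case using rtrancl_into_rtrancl(3) by (rule converse_rtranclp_into_rtranclp)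
qed simp

lemma reach_refl: "reach es v v"
  unfolding reach_def by simp

lemma reach_trans: "reach es u v \<Longrightarrow> reach es v w \<Longrightarrow> reach es u w"
  unfolding reach_def by (rule rtranclp_trans)

definition same_component :: "nat \<Rightarrow> (nat \<times> nat) list \<Rightarrow> (nat \<times> nat) set" where
  "same_component n es = {(u, v). u < n \<and> v < n \<and> reach es u v}"

(* There are at most n components; this yields |F| + c = n from |F| = n - c. *)
lemma card_quotient_le: "finite A \<Longrightarrow> card (A // r) \<le> card A"
  unfolding quotient_def by (metis UNION_singleton_eq_range card_image_le)

lemma num_components_le: "num_components n es \<le> n"
  unfolding num_components_def using card_quotient_le[of "{0..<n}"] by simp

lemma component_enumeration:
  fixes n :: nat and es :: "(nat \<times> nat) list"
  obtains h where
    "\<And>j u v. j < num_components n es \<Longrightarrow> u \<in> h j \<Longrightarrow> v \<in> h j \<longleftrightarrow> v < n \<and> reach es u v"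
    "\<And>v. v < n \<Longrightarrow> \<exists>j < num_components n es. v \<in> h j"
proof -
  let ?rel = "same_component n es" and ?c = "num_components n es"
  have fin: "finite ({0..<n} // ?rel)"
    by (rule finite_quotient) (auto simp: same_component_def)
  have card_classes: "card ({0..<n} // ?rel) = ?c"
    unfolding num_components_def same_component_def ..
  obtain h where h: "bij_betw h {0..<?c} ({0..<n} // ?rel)"
    using ex_bij_betw_nat_finite[OF fin] card_classes by auto
  have in_class: "v \<in> h j \<longleftrightarrow> v < n \<and> reach es u v" if "j < ?c" "u \<in> h j" for j u v
  proof -
    have "h j \<in> {0..<n} // ?rel" using bij_betwE[OF h] that(1) by simp
    then obtain w where w: "h j = ?rel `` {w}" "w < n" by (metis quotientE atLeastLessThan_iff)
    then have wu: "reach es w u" using that(2) unfolding same_component_def by simp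
    then have "reach es w v \<longleftrightarrow> reach es u v" by (metis reach_sym reach_trans)
    then show ?thesis using w unfolding same_component_def by simp
  qed
  have cover: "\<exists>j < ?c. v \<in> h j" if "v < n" for v
  proof -
    have "?rel `` {v} \<in> h ` {0..<?c}"
      unfolding bij_betw_imp_surj_on[OF h] using that by (simp add: quotientI)
    then obtain j where "j < ?c" "?rel `` {v} = h j" by auto
    then show ?thesis using that by (auto simp: same_component_def reach_refl)
  qed
  show ?thesis by (rule that[of h, OF in_class cover])
qed

definition valid_edges :: "nat \<Rightarrow> (nat \<times> nat) list \<Rightarrow> bool" where
  "valid_edges n es \<longleftrightarrow> (\<forall>(a, b) \<in> set es. a < n \<and> b < n \<and> a \<noteq> b)"

lemma incidence_coboundary:
  assumes valid: "valid_edges n es" and k: "k < length es" "es ! k = (a, b)"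
    and x: "x \<in> carrier_vec n"
  shows "(transpose_mat (incidence n es) *\<^sub>v x) $ k = x $ a - x $ b"
proof -
  have ab: "a < n" "b < n" "a \<noteq> b"
    using valid k nth_mem[OF k(1)] unfolding valid_edges_def by fastforce+
  have "(transpose_mat (incidence n es) *\<^sub>v x) $ k
      = (\<Sum>v \<in> {0..<n}. (if v = a then x $ v else 0) - (if v = b then x $ v else 0))"
    using k x ab unfolding incidence_def by (auto simp: scalar_prod_def intro!: sum.cong)
  also have "\<dots> = x $ a - x $ b"
    using ab by (simp add: sum_subtractf sum.delta)
  finally show ?thesis .
qed

lemma kernel_constant_on_components:
  assumes valid: "valid_edges n es" and x: "x \<in> carrier_vec n"
    and kernel: "transpose_mat (incidence n es) *\<^sub>v x = 0\<^sub>v (length es)"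
    and "reach es u v"
  shows "x $ u = x $ v"
  using assms(4) unfolding reach_def
proof (induction rule: rtranclp_induct)
  case (step v w)
  obtain k where k: "k < length es" "es ! k = (v, w) \<or> es ! k = (w, v)"
    using step.hyps(2) unfolding adj_def by (auto simp: in_set_conv_nth)
  then have "x $ v = x $ w"
    using incidence_coboundary[OF valid k(1) _ x] kernel by (metis eq_iff_diff_eq_0 index_zero_vec(1))
  then show ?case using step.IH by simp
qed simp

definition indicator_mat :: "nat \<Rightarrow> nat \<Rightarrow> (nat \<Rightarrow> nat set) \<Rightarrow> real mat" where
  "indicator_mat n c h = mat n c (\<lambda>(v, j). if v \<in> h j then 1 else 0)"

lemma incidence_orthogonal_indicator:
  assumes valid: "valid_edges n es"
    and closed: "\<And>a b j. (a, b) \<in> set es \<Longrightarrow> j < c \<Longrightarrow> a \<in> h j \<longleftrightarrow> b \<in> h j"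
  shows "transpose_mat (incidence n es) * indicator_mat n c h = 0\<^sub>m (length es) c"
proof (rule eq_matI)
  fix k j assume kj: "k < dim_row (0\<^sub>m (length es) c)" "j < dim_col (0\<^sub>m (length es) c)"
  obtain a b where ab: "es ! k = (a, b)" by fastforce
  have col: "col (indicator_mat n c h) j \<in> carrier_vec n"
    unfolding indicator_mat_def carrier_vec_def by simp
  have "(transpose_mat (incidence n es) * indicator_mat n c h) $$ (k, j)
      = (transpose_mat (incidence n es) *\<^sub>v col (indicator_mat n c h) j) $ k"
    using kj unfolding indicator_mat_def incidence_def by simp
  also have "\<dots> = col (indicator_mat n c h) j $ a - col (indicator_mat n c h) j $ b"
    using kj by (intro incidence_coboundary[OF valid _ ab col]) simp
  also have "\<dots> = 0"
    using kj closed[of a b j] nth_mem[of k es] valid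
    by (auto simp: indicator_mat_def valid_edges_def ab)
  finally show "(transpose_mat (incidence n es) * indicator_mat n c h) $$ (k, j)
      = 0\<^sub>m (length es) c $$ (k, j)" using kj by simp
qed (auto simp: indicator_mat_def incidence_def)

lemma indicator_joint_kernel:
  assumes valid: "valid_edges n fs"
    and inside: "\<And>j u. j < c \<Longrightarrow> u \<in> h j \<Longrightarrow> u < n"
    and connected: "\<And>j u v. j < c \<Longrightarrow> u \<in> h j \<Longrightarrow> v \<in> h j \<Longrightarrow> reach fs u v"
    and cover: "\<And>v. v < n \<Longrightarrow> \<exists>j < c. v \<in> h j"
    and x: "x \<in> carrier_vec n"
    and forest_kernel: "transpose_mat (incidence n fs) *\<^sub>v x = 0\<^sub>v (length fs)"
    and indicator_kernel: "transpose_mat (indicator_mat n c h) *\<^sub>v x = 0\<^sub>v c"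
  shows "x = 0\<^sub>v n"
proof (rule eq_vecI)
  fix v assume "v < dim_vec (0\<^sub>v n)"
  then have v: "v < n" by simp
  obtain j where j: "j < c" "v \<in> h j" using cover[OF v] by blast
  have sub: "h j \<subseteq> {0..<n}" using inside[OF j(1)] by auto
  have const: "x $ u = x $ v" if "u \<in> h j" for u
    using kernel_constant_on_components[OF valid x forest_kernel connected[OF j(1) that j(2)]] .
  have "(transpose_mat (indicator_mat n c h) *\<^sub>v x) $ j
      = (\<Sum>u \<in> {0..<n}. (if u \<in> h j then 1 else 0) * x $ u)"
    using j x unfolding indicator_mat_def by (simp add: scalar_prod_def)
  also have "\<dots> = (\<Sum>u \<in> {0..<n}. if u \<in> h j then x $ v else 0)"
    using const by (intro sum.cong) simp_all
  also have "\<dots> = real (card (h j)) * x $ v"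
    using Int_absorb1[OF sub] by (simp add: sum.inter_restrict[symmetric])
  finally have "real (card (h j)) * x $ v = 0" using indicator_kernel j(1) by simp
  moreover have "card (h j) \<noteq> 0" using j(2) finite_subset[OF sub] by auto
  ultimately show "x $ v = 0\<^sub>v n $ v" using v by simp
qed (use x in simp)

lemma spanning_forest_frame:
  assumes graph: "simple_graph n (fs @ cs)" and forest: "spanning_forest n fs (fs @ cs)"
  defines "c \<equiv> num_components n (fs @ cs)"
  obtains K where "complementary_frame n (length fs) c (incidence n fs) K"
    "transpose_mat K * incidence n cs = 0\<^sub>m c (length cs)"
proof -
  obtain h where
    in_class: "\<And>j u v. j < c \<Longrightarrow> u \<in> h j \<Longrightarrow> v \<in> h j \<longleftrightarrow> v < n \<and> reach (fs @ cs) u v"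
    and cover: "\<And>v. v < n \<Longrightarrow> \<exists>j < c. v \<in> h j"
    unfolding c_def by (rule component_enumeration[of n "fs @ cs"]) blast
  have valid: "valid_edges n fs" "valid_edges n cs"
    using graph unfolding simple_graph_def valid_edges_def by auto
  have closed: "a \<in> h j \<longleftrightarrow> b \<in> h j" if "(a, b) \<in> set (fs @ cs)" "j < c" for a b j
  proof -
    have "a < n" "b < n" using that(1) graph unfolding simple_graph_def by auto
    then show ?thesis
      using in_class[OF that(2), of a b] in_class[OF that(2), of b a]
        reach_edge[OF that(1)] reach_sym[OF reach_edge[OF that(1)]] by blast
  qed
  have inside: "u < n" if "j < c" "u \<in> h j" for j u
    using in_class[OF that, of u] that(2) by simp
  have reach_forest: "reach fs u v" if "j < c" "u \<in> h j" "v \<in> h j" for j u v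
    using in_class[OF that(1,2), of v] inside[OF that(1,2)] that(3) forest
    unfolding spanning_forest_def by blast
  define K where "K = indicator_mat n c h"
  have K: "K \<in> carrier_mat n c" unfolding K_def indicator_mat_def by simp
  have dims: "length fs + c = n"
    using forest num_components_le[of n "fs @ cs"] unfolding spanning_forest_def c_def by simp
  have "complementary_frame n (length fs) c (incidence n fs) K"
  proof
    show "incidence n fs \<in> carrier_mat n (length fs)" unfolding incidence_def by simp
    show "transpose_mat (incidence n fs) * K = 0\<^sub>m (length fs) c"
      unfolding K_def by (rule incidence_orthogonal_indicator[OF valid(1)]) (use closed in simp)
    show "x = 0\<^sub>v n" if "x \<in> carrier_vec n"
      "transpose_mat (incidence n fs) *\<^sub>v x = 0\<^sub>v (length fs)"
      "transpose_mat K *\<^sub>v x = 0\<^sub>v c" for x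
      using indicator_joint_kernel[OF valid(1) inside reach_forest cover that[unfolded K_def]] .
  qed (fact K dims)+
  moreover have "transpose_mat K * incidence n cs = 0\<^sub>m c (length cs)"
  proof -
    have "transpose_mat (incidence n cs) * K = 0\<^sub>m (length cs) c"
      unfolding K_def by (rule incidence_orthogonal_indicator[OF valid(2)]) (use closed in simp)
    then show ?thesis
      using transpose_mult[of "transpose_mat (incidence n cs)" "length cs" n K c] K
      unfolding incidence_def by simp
  qed
  ultimately show ?thesis using that by blast
qed

lemma incidence_append: "incidence n (fs @ cs) = hcat (incidence n fs) (incidence n cs)"
  by (rule eq_matI) (auto simp: incidence_def hcat_def nth_append)

theorem proposition1:
  fixes n :: nat and fs cs :: "(nat \<times> nat) list" and ws :: "real list"
  assumes graph: "simple_graph n (fs @ cs)"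
    and wlen: "length ws = length (fs @ cs)"
    and wnz: "\<forall>x \<in> set ws. x \<noteq> 0"
    and forest: "spanning_forest n fs (fs @ cs)"
  shows "let c = num_components n (fs @ cs);
             E = incidence n (fs @ cs);
             EF = incidence n fs;
             EC = incidence n cs;
             W = mat_diag (length (fs @ cs)) (\<lambda>k. ws ! k);
             Le = transpose_mat EF * EF;
             R = hcat (1\<^sub>m (length fs)) (the (mat_inverse Le) * transpose_mat EF * EC)
         in similar_mat (E * W * transpose_mat E)
              (four_block_mat (Le * R * W * transpose_mat R) (0\<^sub>m (length fs) c)
                              (0\<^sub>m c (length fs)) (0\<^sub>m c c))"
proof -
  define c where "c = num_components n (fs @ cs)"
  obtain K where frame: "complementary_frame n (length fs) c (incidence n fs) K"
    and KC: "transpose_mat K * incidence n cs = 0\<^sub>m c (length cs)"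
    using spanning_forest_frame[OF graph forest] unfolding c_def by blast
  interpret complementary_frame n "length fs" c "incidence n fs" K by (rule frame)
  have EC: "incidence n cs \<in> carrier_mat n (length cs)" unfolding incidence_def by simp
  have W: "mat_diag (length (fs @ cs)) (\<lambda>k. ws ! k)
      \<in> carrier_mat (length fs + length cs) (length fs + length cs)"
    by simp
  show ?thesis
    using similar_block_diagonal[OF EC KC W refl]
    unfolding Let_def incidence_append c_def[symmetric] gram_inv_def gram_def .
qed

end
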